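(* Let $G=(V,E)$ be a finite undirected graph with independence number $\alpha_G$. For all $v\in V$, choose numbers $q_v\in(0,1]$ and define \[ c_v=\sum_{S\subseteq V\setminus\{v\}}\frac{\lambda_{S,v}}{1+|S|},\quad \lambda_{S,v}=\Big(\prod_{w\in S}q_w\Big)\Big(\prod_{u\in V\setminus(\{v\}\cup S)}(1-q_u)\Big),\quad Q_v=1-\prod_{w\in\mathcal{N}_v}(1-q_w). \] Then \[ Q=\sum_{v\in V}\frac{q_v c_v}{Q_v}\le\frac{\alpha_G+1}{1-e^{-1}}. \]
   Context: $\mathcal{N}_v=\{v\}\cup\{w:(v,w)\in E\}$ is the closed neighborhood of $v$. The independence number $\alpha_G$ is the largest size of a set of pairwise non-adjacent vertices. *)

theory Defs
  imports Complex_Main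
begin

definition simple_graph :: "'a set \<Rightarrow> ('a \<Rightarrow> 'a \<Rightarrow> bool) \<Rightarrow> bool" where
  "simple_graph V E \<longleftrightarrow> finite V \<and> (\<forall>x y. E x y \<longrightarrow> x \<in> V \<and> y \<in> V)
     \<and> (\<forall>x y. E x y \<longrightarrow> E y x) \<and> (\<forall>x. \<not> E x x)"

definition closed_nbhd :: "('a \<Rightarrow> 'a \<Rightarrow> bool) \<Rightarrow> 'a \<Rightarrow> 'a set" where
  "closed_nbhd E v = {v} \<union> {w. E v w}"

definition independent_set :: "'a set \<Rightarrow> ('a \<Rightarrow> 'a \<Rightarrow> bool) \<Rightarrow> 'a set \<Rightarrow> bool" where
  "independent_set V E I \<longleftrightarrow> I \<subseteq> V \<and> (\<forall>x\<in>I. \<forall>y\<in>I. \<not> E x y)"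

definition independence_number :: "'a set \<Rightarrow> ('a \<Rightarrow> 'a \<Rightarrow> bool) \<Rightarrow> nat" where
  "independence_number V E = Max (card ` {I. independent_set V E I})"

definition lam :: "'a set \<Rightarrow> ('a \<Rightarrow> real) \<Rightarrow> 'a set \<Rightarrow> 'a \<Rightarrow> real" where
  "lam V q S v = (\<Prod>w\<in>S. q w) * (\<Prod>u\<in>V - ({v} \<union> S). 1 - q u)"

definition cval :: "'a set \<Rightarrow> ('a \<Rightarrow> real) \<Rightarrow> 'a \<Rightarrow> real" where
  "cval V q v = (\<Sum>S\<in>Pow (V - {v}). lam V q S v / (1 + real (card S)))"

definition Qval :: "('a \<Rightarrow> 'a \<Rightarrow> bool) \<Rightarrow> ('a \<Rightarrow> real) \<Rightarrow> 'a \<Rightarrow> real" where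
  "Qval E q v = 1 - (\<Prod>w\<in>closed_nbhd E v. 1 - q w)"

end

theory Submission
  imports Defs "HOL-Analysis.Convex"
begin

(*
  Let \<mu>_v be the q-weight of the closed neighbourhood of v. By convexity of exp,
  Q_v \<ge> 1 - e^(-\<mu>_v) \<ge> (1 - 1/e) min(1, \<mu>_v), and since c_v \<le> 1 every summand is at most
  (q_v c_v + q_v/\<mu>_v) / (1 - 1/e). The terms q_v c_v add up to at most 1: q_v c_v is the
  expected share of v when a random vertex set, containing each u independently with
  probability q_u, is divided evenly among its members. The terms q_v/\<mu>_v add up to at most
  \<alpha>_G by a weighted Caro-Wei argument: put a vertex of least neighbourhood weight into the
  independent set and delete its closed neighbourhood; this loses at most 1 from the sum.
*)

lemma one_minus_exp_neg_ge_min: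
  fixes m :: real
  assumes "0 \<le> m"
  shows "(1 - exp (-1)) * min 1 m \<le> 1 - exp (-m)"
proof (cases "m \<le> 1")
  case True
  have "exp ((1 - m) *\<^sub>R 0 + m *\<^sub>R (-1)) \<le> (1 - m) * exp 0 + m * exp (-1)"
    using assms True by (intro convex_onD[OF exp_convex]) auto
  with True show ?thesis by (simp add: algebra_simps)
qed simp

lemma prod_one_minus_le_exp_neg_sum:
  fixes x :: "'a \<Rightarrow> real"
  assumes "\<And>i. i \<in> A \<Longrightarrow> x i \<le> 1"
  shows "(\<Prod>i\<in>A. 1 - x i) \<le> exp (- (\<Sum>i\<in>A. x i))"
proof (cases "finite A")
  case True
  have "(\<Prod>i\<in>A. 1 - x i) \<le> (\<Prod>i\<in>A. exp (- x i))"
  proof (intro prod_mono conjI)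
    fix i assume "i \<in> A"
    then show "0 \<le> 1 - x i" using assms by simp
    show "1 - x i \<le> exp (- x i)" using exp_ge_add_one_self[of "- x i"] by simp
  qed
  also have "\<dots> = exp (- (\<Sum>i\<in>A. x i))"
    using True by (simp add: exp_sum sum_negf[symmetric])
  finally show ?thesis .
qed simp

lemma Qval_ge_min:
  assumes "\<And>w. w \<in> closed_nbhd E v \<Longrightarrow> 0 \<le> q w \<and> q w \<le> 1"
  shows "(1 - exp (-1)) * min 1 (\<Sum>w\<in>closed_nbhd E v. q w) \<le> Qval E q v"
proof -
  have "(1 - exp (-1)) * min 1 (\<Sum>w\<in>closed_nbhd E v. q w)
          \<le> 1 - exp (- (\<Sum>w\<in>closed_nbhd E v. q w))"
    using assms by (intro one_minus_exp_neg_ge_min sum_nonneg) auto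
  also have "\<dots> \<le> Qval E q v"
    unfolding Qval_def using assms by (simp add: prod_one_minus_le_exp_neg_sum)
  finally show ?thesis .
qed

definition subset_prob :: "'a set \<Rightarrow> ('a \<Rightarrow> real) \<Rightarrow> 'a set \<Rightarrow> real" where
  "subset_prob A q T = (\<Prod>w\<in>T. q w) * (\<Prod>u\<in>A - T. 1 - q u)"

lemma sum_subset_prob_Pow:
  assumes "finite A"
  shows "(\<Sum>T\<in>Pow A. subset_prob A q T) = 1"
  unfolding subset_prob_def using prod_add[OF assms, of q "\<lambda>u. 1 - q u"] by simp

lemma subset_prob_nonneg:
  assumes "\<And>u. u \<in> A \<Longrightarrow> 0 \<le> q u \<and> q u \<le> 1" "T \<subseteq> A"
  shows "0 \<le> subset_prob A q T"
  unfolding subset_prob_def using assms by (intro mult_nonneg_nonneg prod_nonneg) auto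

lemma lam_eq_subset_prob: "lam V q S v = subset_prob (V - {v}) q S"
  unfolding lam_def subset_prob_def by (simp add: Diff_insert set_diff_eq)

lemma mult_lam_eq_subset_prob_insert:
  assumes "finite V" "S \<subseteq> V - {v}"
  shows "q v * lam V q S v = subset_prob V q (insert v S)"
proof -
  have "finite S" "v \<notin> S" using assms finite_subset by auto
  moreover have "V - insert v S = V - ({v} \<union> S)" by auto
  ultimately show ?thesis unfolding lam_def subset_prob_def by (simp add: mult.assoc)
qed

lemma cval_nonneg:
  assumes "\<And>u. u \<in> V \<Longrightarrow> 0 \<le> q u \<and> q u \<le> 1"
  shows "0 \<le> cval V q v"
  unfolding cval_def lam_eq_subset_prob
  using assms by (intro sum_nonneg divide_nonneg_nonneg subset_prob_nonneg) auto

lemma cval_le_1: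
  assumes "finite V" "\<And>u. u \<in> V \<Longrightarrow> 0 \<le> q u \<and> q u \<le> 1"
  shows "cval V q v \<le> 1"
proof -
  have "cval V q v \<le> (\<Sum>S\<in>Pow (V - {v}). lam V q S v)"
    unfolding cval_def lam_eq_subset_prob
  proof (intro sum_mono)
    fix S assume "S \<in> Pow (V - {v})"
    then have "0 \<le> subset_prob (V - {v}) q S"
      using assms(2) by (intro subset_prob_nonneg) auto
    then show "subset_prob (V - {v}) q S / (1 + real (card S)) \<le> subset_prob (V - {v}) q S"
      by (simp add: divide_le_eq mult_le_cancel_left1)
  qed
  also have "\<dots> = 1"
    unfolding lam_eq_subset_prob using assms(1) by (simp add: sum_subset_prob_Pow)
  finally show ?thesis .
qed

lemma sum_Pow_remove_insert:
  assumes "finite V"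
  shows "(\<Sum>v\<in>V. \<Sum>S\<in>Pow (V - {v}). g v (insert v S)) = (\<Sum>T\<in>Pow V. \<Sum>v\<in>T. g v T)"
proof -
  have "(\<Sum>S\<in>Pow (V - {v}). g v (insert v S)) = (\<Sum>T | T \<in> Pow V \<and> v \<in> T. g v T)"
    if "v \<in> V" for v
    by (rule sum.reindex_bij_betw, rule bij_betw_byWitness[where f' = "\<lambda>T. T - {v}"])
       (use that in auto)
  then have "(\<Sum>v\<in>V. \<Sum>S\<in>Pow (V - {v}). g v (insert v S))
               = (\<Sum>v\<in>V. \<Sum>T | T \<in> Pow V \<and> v \<in> T. g v T)"
    by simp
  also have "\<dots> = (\<Sum>T\<in>Pow V. \<Sum>v | v \<in> V \<and> v \<in> T. g v T)"
    using assms by (intro sum.swap_restrict) auto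
  also have "\<dots> = (\<Sum>T\<in>Pow V. \<Sum>v\<in>T. g v T)"
    by (intro sum.cong refl) (auto intro: arg_cong[where f = "\<lambda>A. sum _ A"])
  finally show ?thesis .
qed

lemma sum_q_cval_le_1:
  assumes fin: "finite V" and q: "\<And>u. u \<in> V \<Longrightarrow> 0 \<le> q u \<and> q u \<le> 1"
  shows "(\<Sum>v\<in>V. q v * cval V q v) \<le> 1"
proof -
  have share: "q v * (lam V q S v / (1 + real (card S)))
                 = subset_prob V q (insert v S) / real (card (insert v S))"
    if "S \<in> Pow (V - {v})" for v S
  proof -
    have "finite S" "v \<notin> S" using that fin finite_subset by auto
    then show ?thesis using mult_lam_eq_subset_prob_insert[OF fin] that by simp
  qed
  have "(\<Sum>v\<in>V. q v * cval V q v)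
          = (\<Sum>v\<in>V. \<Sum>S\<in>Pow (V - {v}).
               subset_prob V q (insert v S) / real (card (insert v S)))"
    unfolding cval_def sum_distrib_left by (intro sum.cong refl share)
  also have "\<dots> = (\<Sum>T\<in>Pow V. \<Sum>v\<in>T. subset_prob V q T / real (card T))"
    by (rule sum_Pow_remove_insert[OF fin])
  also have "\<dots> \<le> (\<Sum>T\<in>Pow V. subset_prob V q T)"
  proof (intro sum_mono)
    fix T assume "T \<in> Pow V"
    then have "0 \<le> subset_prob V q T"
      using q by (intro subset_prob_nonneg) auto
    then show "(\<Sum>v\<in>T. subset_prob V q T / real (card T)) \<le> subset_prob V q T"
      by (cases "card T = 0") auto
  qed
  also have "\<dots> = 1" by (rule sum_subset_prob_Pow[OF fin])
  finally show ?thesis .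
qed

definition nbhd_weight :: "('a \<Rightarrow> 'a \<Rightarrow> bool) \<Rightarrow> ('a \<Rightarrow> real) \<Rightarrow> 'a set \<Rightarrow> 'a \<Rightarrow> real" where
  "nbhd_weight E q W v = (\<Sum>w\<in>closed_nbhd E v \<inter> W. q w)"

lemma nbhd_weight_ge:
  assumes "finite W" "v \<in> W" "\<And>w. w \<in> W \<Longrightarrow> 0 \<le> q w"
  shows "q v \<le> nbhd_weight E q W v"
  unfolding nbhd_weight_def using assms by (intro member_le_sum) (auto simp: closed_nbhd_def)

lemma nbhd_weight_mono:
  assumes "finite W" "W' \<subseteq> W" "\<And>w. w \<in> W \<Longrightarrow> 0 \<le> q w"
  shows "nbhd_weight E q W' v \<le> nbhd_weight E q W v"
  unfolding nbhd_weight_def using assms by (intro sum_mono2) auto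

lemma caro_wei_sum_remove_min_nbhd:
  assumes fin: "finite W" and pos: "\<And>w. w \<in> W \<Longrightarrow> 0 < q w"
    and v: "v \<in> W" and min: "\<And>u. u \<in> W \<Longrightarrow> nbhd_weight E q W v \<le> nbhd_weight E q W u"
  shows "(\<Sum>u\<in>W. q u / nbhd_weight E q W u)
           \<le> 1 + (\<Sum>u\<in>W - closed_nbhd E v. q u / nbhd_weight E q (W - closed_nbhd E v) u)"
proof -
  let ?N = "closed_nbhd E v \<inter> W" and ?W' = "W - closed_nbhd E v"
  have nonneg: "\<And>w. w \<in> W \<Longrightarrow> 0 \<le> q w" using pos less_imp_le by blast
  have weight_pos: "0 < nbhd_weight E q W' u" if "W' \<subseteq> W" "u \<in> W'" for W' u
    using nbhd_weight_ge[of W' u q E] pos[of u] that nonneg finite_subset[OF _ fin] by force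
  have "(\<Sum>u\<in>?N. q u / nbhd_weight E q W u) \<le> (\<Sum>u\<in>?N. q u / nbhd_weight E q W v)"
    using min nonneg weight_pos[of W] v by (intro sum_mono divide_left_mono) auto
  also have "\<dots> = 1"
    using weight_pos[of W v] v unfolding nbhd_weight_def by (simp add: sum_divide_distrib[symmetric])
  finally have near: "(\<Sum>u\<in>?N. q u / nbhd_weight E q W u) \<le> 1" .
  have far: "(\<Sum>u\<in>?W'. q u / nbhd_weight E q W u) \<le> (\<Sum>u\<in>?W'. q u / nbhd_weight E q ?W' u)"
  proof (intro sum_mono divide_left_mono)
    fix u assume u: "u \<in> ?W'"
    show "nbhd_weight E q ?W' u \<le> nbhd_weight E q W u"
      by (rule nbhd_weight_mono[OF fin _ nonneg]) auto
    show "0 \<le> q u" "0 < nbhd_weight E q W u * nbhd_weight E q ?W' u"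
      using u nonneg weight_pos[of W u] weight_pos[of ?W' u] by auto
  qed
  have "(\<Sum>u\<in>W. q u / nbhd_weight E q W u)
          = (\<Sum>u\<in>?N. q u / nbhd_weight E q W u) + (\<Sum>u\<in>?W'. q u / nbhd_weight E q W u)"
    using fin by (subst sum.union_disjoint[symmetric]) (auto intro: sum.cong)
  with near far show ?thesis by linarith
qed

lemma independent_set_insert_outside_nbhd:
  assumes sym: "\<And>x y. E x y \<Longrightarrow> E y x" and irrefl: "\<And>x. \<not> E x x"
    and I: "independent_set (W - closed_nbhd E v) E I" and v: "v \<in> W"
  shows "independent_set W E (insert v I)"
  using I v sym irrefl unfolding independent_set_def closed_nbhd_def by blast

lemma exists_independent_set_ge_caro_wei_sum:
  assumes sym: "\<And>x y. E x y \<Longrightarrow> E y x" and irrefl: "\<And>x. \<not> E x x"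
  shows "finite W \<Longrightarrow> (\<And>w. w \<in> W \<Longrightarrow> 0 < q w) \<Longrightarrow>
    \<exists>I. independent_set W E I \<and> (\<Sum>u\<in>W. q u / nbhd_weight E q W u) \<le> real (card I)"
proof (induction W rule: finite_psubset_induct)
  case (psubset W)
  show ?case
  proof (cases "W = {}")
    case True
    then show ?thesis by (auto simp: independent_set_def)
  next
    case False
    then obtain v where v: "v \<in> W"
      and min: "\<And>u. u \<in> W \<Longrightarrow> nbhd_weight E q W v \<le> nbhd_weight E q W u"
      using ex_is_arg_min_if_finite[OF psubset.hyps, of "nbhd_weight E q W"]
      by (auto simp: is_arg_min_linorder)
    let ?W' = "W - closed_nbhd E v"
    have "?W' \<subset> W" using v by (auto simp: closed_nbhd_def)
    then obtain I where I: "independent_set ?W' E I"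
      and sum_I: "(\<Sum>u\<in>?W'. q u / nbhd_weight E q ?W' u) \<le> real (card I)"
      using psubset.IH psubset.prems by blast
    have "finite I" "v \<notin> I"
      using I psubset.hyps finite_subset by (auto simp: independent_set_def closed_nbhd_def)
    then have "(\<Sum>u\<in>W. q u / nbhd_weight E q W u) \<le> real (card (insert v I))"
      using caro_wei_sum_remove_min_nbhd[OF psubset.hyps psubset.prems v min] sum_I by simp
    then show ?thesis
      using independent_set_insert_outside_nbhd[OF sym irrefl I v] by blast
  qed
qed

lemma card_le_independence_number:
  assumes "finite V" "independent_set V E I"
  shows "card I \<le> independence_number V E"
  unfolding independence_number_def
proof (rule Max_ge)
  have "{I. independent_set V E I} \<subseteq> Pow V" by (auto simp: independent_set_def)
  then show "finite (card ` {I. independent_set V E I})"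
    using assms(1) by (intro finite_imageI) (auto intro: finite_subset)
qed (use assms(2) in auto)

theorem weighted_caro_wei:
  assumes G: "simple_graph V E" and pos: "\<And>v. v \<in> V \<Longrightarrow> 0 < q v"
  shows "(\<Sum>v\<in>V. q v / (\<Sum>w\<in>closed_nbhd E v. q w)) \<le> real (independence_number V E)"
proof -
  have fin: "finite V" and sym: "\<And>x y. E x y \<Longrightarrow> E y x" and irrefl: "\<And>x. \<not> E x x"
    using G unfolding simple_graph_def by blast+
  obtain I where I: "independent_set V E I"
    and sum_I: "(\<Sum>v\<in>V. q v / nbhd_weight E q V v) \<le> real (card I)"
    using exists_independent_set_ge_caro_wei_sum[where E = E and W = V and q = q,
                                                 OF sym irrefl fin pos]
    by blast
  have "closed_nbhd E v \<inter> V = closed_nbhd E v" if "v \<in> V" for v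
    using G that unfolding simple_graph_def closed_nbhd_def by blast
  then have "(\<Sum>v\<in>V. q v / (\<Sum>w\<in>closed_nbhd E v. q w)) = (\<Sum>v\<in>V. q v / nbhd_weight E q V v)"
    unfolding nbhd_weight_def by simp
  also have "\<dots> \<le> real (independence_number V E)"
    using sum_I card_le_independence_number[OF fin I] by linarith
  finally show ?thesis .
qed

lemma q_cval_div_Qval_le:
  assumes G: "simple_graph V E" and q: "\<And>v. v \<in> V \<Longrightarrow> 0 < q v \<and> q v \<le> 1" and v: "v \<in> V"
  shows "q v * cval V q v / Qval E q v
           \<le> (q v * cval V q v + q v / (\<Sum>w\<in>closed_nbhd E v. q w)) / (1 - exp (-1))"
proof -
  define a where "a = q v * cval V q v"
  define \<mu> where "\<mu> = (\<Sum>w\<in>closed_nbhd E v. q w)"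
  define K :: real where "K = 1 - exp (-1)"
  have nbhd: "closed_nbhd E v \<subseteq> V" and fin: "finite V"
    using G v unfolding simple_graph_def closed_nbhd_def by blast+
  have K: "0 < K" unfolding K_def by simp
  have q01: "\<And>u. u \<in> V \<Longrightarrow> 0 \<le> q u \<and> q u \<le> 1" using q by (simp add: less_imp_le)
  then have "0 \<le> cval V q v" "cval V q v \<le> 1"
    using cval_nonneg[of V q] cval_le_1[OF fin, of q] by blast+
  then have a: "0 \<le> a" "a \<le> q v"
    unfolding a_def using q[OF v] by (auto simp: mult_le_cancel_left1)
  have "q v \<le> \<mu>"
    unfolding \<mu>_def using nbhd q01 fin finite_subset
    by (intro member_le_sum) (auto simp: closed_nbhd_def)
  with q[OF v] have \<mu>: "0 < \<mu>" by linarith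
  have Q: "K * min 1 \<mu> \<le> Qval E q v"
    unfolding K_def \<mu>_def using nbhd q01 by (intro Qval_ge_min) auto
  have "a / Qval E q v \<le> (a + q v / \<mu>) / K"
  proof (cases "1 \<le> \<mu>")
    case True
    then have "a / Qval E q v \<le> a / K" using a K Q by (intro divide_left_mono) auto
    also have "\<dots> \<le> (a + q v / \<mu>) / K" using a \<mu> K by (intro divide_right_mono) auto
    finally show ?thesis .
  next
    case False
    then have "a / Qval E q v \<le> q v / (K * \<mu>)" using a \<mu> K Q by (intro frac_le) auto
    also have "\<dots> \<le> (a + q v / \<mu>) / K" using a \<mu> K by (simp add: field_simps)
    finally show ?thesis .
  qed
  then show ?thesis unfolding a_def \<mu>_def K_def .
qed

theorem lemma4:
  fixes V :: "'a set" and E :: "'a \<Rightarrow> 'a \<Rightarrow> bool" and q :: "'a \<Rightarrow> real"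
  assumes "simple_graph V E"
    and "\<And>v. v \<in> V \<Longrightarrow> 0 < q v \<and> q v \<le> 1"
  shows "(\<Sum>v\<in>V. q v * cval V q v / Qval E q v)
           \<le> (real (independence_number V E) + 1) / (1 - exp (-1))"
proof -
  have fin: "finite V" using assms(1) unfolding simple_graph_def by blast
  have q01: "\<And>v. v \<in> V \<Longrightarrow> 0 \<le> q v \<and> q v \<le> 1" using assms(2) by (simp add: less_imp_le)
  have "(\<Sum>v\<in>V. q v * cval V q v / Qval E q v)
          \<le> (\<Sum>v\<in>V. (q v * cval V q v + q v / (\<Sum>w\<in>closed_nbhd E v. q w)) / (1 - exp (-1)))"
    using q_cval_div_Qval_le[OF assms] by (rule sum_mono)
  also have "\<dots> = ((\<Sum>v\<in>V. q v * cval V q v) + (\<Sum>v\<in>V. q v / (\<Sum>w\<in>closed_nbhd E v. q w)))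
                    / (1 - exp (-1))"
    by (simp add: sum_divide_distrib[symmetric] sum.distrib)
  also have "\<dots> \<le> (1 + real (independence_number V E)) / (1 - exp (-1))"
    using sum_q_cval_le_1[OF fin q01] weighted_caro_wei[OF assms(1)] assms(2)
    by (intro divide_right_mono add_mono) auto
  finally show ?thesis by (simp add: add.commute)
qed

end
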